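(* Let $\widetilde{C}(\boldsymbol{\theta},\varepsilon)$ denote a noisy cost function at noise level $\varepsilon$, and let $a_1>1$ be a boost factor with perfect access to the noise level $a_1\varepsilon$. Consider a Zero Noise Extrapolation estimator with two noise levels $$C_m(\boldsymbol{\theta})=\frac{A\,\widetilde{C}(\boldsymbol{\theta},\varepsilon)-B\,\widetilde{C}(\boldsymbol{\theta},a_1\varepsilon)}{D}+E,$$ with real constants $A,B,D,E$ independent of $\boldsymbol{\theta}$, $D\ne0$, and ratio $c=A/B$ equal to $a_1$ (Richardson extrapolation), $a_1r(\varepsilon)^{t(\varepsilon)}/r(a_1\varepsilon)^{t(a_1\varepsilon)}$ (exponential extrapolation, with $r,t$ the positive functions of the noise level in the exponential noise model), or $a_1^{-(L+1)}$ (NIBP extrapolation, $L$ being the circuit depth). Assume $C_m$ is estimated from independent estimates of the two noisy costs and that the variance of the boosted-noise estimate is never smaller than that of the base-noise estimate, so that the error mitigation cost satisfies $\gamma\ge(A^2+B^2)/D^2$. Let $\boldsymbol{\theta}_{\varepsilon*}$ be a global minimizer of $\widetilde{C}(\cdot,\varepsilon)$ over the accessible parameters, let $\langle\cdot\rangle_i$ denote the average over accessible parameter vectors $\boldsymbol{\theta}_i$, write $\Delta\widetilde{C}(\boldsymbol{\theta}_{i,\varepsilon*},x)=\widetilde{C}(\boldsymbol{\theta}_i,x)-\widetilde{C}(\boldsymbol{\theta}_{\varepsilon*},x)$, $\Delta C_m(\boldsymbol{\theta}_{i,\varepsilon*})=C_m(\boldsymbol{\theta}_i)-C_m(\boldsymbol{\theta}_{\varepsilon*})$,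 assume $\langle\Delta\widetilde{C}(\boldsymbol{\theta}_{i,\varepsilon*},\varepsilon)\rangle_i\neq0$, and set $$z=\frac{\langle\Delta\widetilde{C}(\boldsymbol{\theta}_{i,\varepsilon*},a_1\varepsilon)\rangle_i}{\langle\Delta\widetilde{C}(\boldsymbol{\theta}_{i,\varepsilon*},\varepsilon)\rangle_i}.$$ Then the average relative resolvability satisfies $$\overline{\chi}\le\frac{(z-c)^2}{c^2+1}.$$ Consequently, if $z\le1$ and $\langle\Delta\widetilde{C}(\boldsymbol{\theta}_{i,\varepsilon*},a_1\varepsilon)\rangle_i\ge0$, then $\overline{\chi}\le1$ for each of the three extrapolation strategies.
   Context: The average relative resolvability is $\overline{\chi}=\frac{1}{\gamma}\Big(\frac{\langle\Delta C_m(\boldsymbol{\theta}_{i,\varepsilon*})\rangle_i}{\langle\Delta\widetilde{C}(\boldsymbol{\theta}_{i,\varepsilon*},\varepsilon)\rangle_i}\Big)^2$, where $\gamma$ is the error mitigation cost, i.e. the ratio of the variance of the mitigated estimate to the variance of the unmitigated noisy estimate. *)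

theory Defs
  imports Complex_Main
begin

definition avg :: "'p set \<Rightarrow> ('p \<Rightarrow> real) \<Rightarrow> real" where
  "avg Th f = (\<Sum>th\<in>Th. f th) / real (card Th)"

definition zne_cost :: "real \<Rightarrow> real \<Rightarrow> real \<Rightarrow> real \<Rightarrow> ('p \<Rightarrow> real \<Rightarrow> real)
    \<Rightarrow> real \<Rightarrow> real \<Rightarrow> 'p \<Rightarrow> real" where
  "zne_cost A B D E Ct eps a1 th = (A * Ct th eps - B * Ct th (a1 * eps)) / D + E"

text \<open>Error mitigation cost: variance of the mitigated estimate (from independent
  estimates with variances v0 at eps, v1 at a1 eps) divided by the variance v0 of the
  unmitigated noisy estimate.\<close>
definition mitigation_cost :: "real \<Rightarrow> real \<Rightarrow> real \<Rightarrow> real \<Rightarrow> real \<Rightarrow> real" where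
  "mitigation_cost A B D v0 v1 = ((A / D)^2 * v0 + (B / D)^2 * v1) / v0"

definition avg_rel_resolvability ::
  "real \<Rightarrow> 'p set \<Rightarrow> ('p \<Rightarrow> real) \<Rightarrow> ('p \<Rightarrow> real) \<Rightarrow> 'p \<Rightarrow> real" where
  "avg_rel_resolvability gamma Th Cm Cn ths =
     (1 / gamma) * (avg Th (\<lambda>th. Cm th - Cm ths) / avg Th (\<lambda>th. Cn th - Cn ths))^2"

end

theory Submission
  imports Defs
begin

text \<open>Averaging is linear, so the averaged gap of the mitigated cost is
  \<open>(A X - B Y)/D\<close> with \<open>X, Y\<close> the averaged noisy gaps at \<open>eps\<close> and \<open>a1 eps\<close>; dividing
  by \<open>X\<close> gives \<open>(A - B z)/D\<close>. With \<open>\<gamma> \<ge> (A\<^sup>2 + B\<^sup>2)/D\<^sup>2\<close> the resolvability is at most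
  \<open>(A - B z)\<^sup>2/(A\<^sup>2 + B\<^sup>2) = (z - c)\<^sup>2/(c\<^sup>2 + 1)\<close>. All three strategies have \<open>c > 0\<close>,
  and for \<open>0 \<le> z \<le> 1\<close> this gives \<open>(z - c)\<^sup>2 \<le> 1 + c\<^sup>2\<close>.\<close>

lemma avg_nonneg:
  assumes "\<And>x. x \<in> Th \<Longrightarrow> f x \<ge> 0"
  shows "avg Th f \<ge> 0"
  unfolding avg_def using assms by (simp add: sum_nonneg)

lemma avg_linear_combination:
  "avg Th (\<lambda>x. (a * f x - b * g x) / d) = (a * avg Th f - b * avg Th g) / d"
  unfolding avg_def
  by (simp add: sum_divide_distrib[symmetric] sum_distrib_left[symmetric] sum_subtractf
      diff_divide_distrib mult.commute)

lemma zne_cost_diff: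
  "zne_cost A B D E Ct eps a1 th - zne_cost A B D E Ct eps a1 th' =
     (A * (Ct th eps - Ct th' eps) - B * (Ct th (a1 * eps) - Ct th' (a1 * eps))) / D"
  unfolding zne_cost_def by (cases "D = 0") (simp_all add: field_simps)

lemma avg_zne_cost_diff_ratio:
  assumes "avg Th (\<lambda>th. Ct th eps - Ct ths eps) \<noteq> 0"
  shows "avg Th (\<lambda>th. zne_cost A B D E Ct eps a1 th - zne_cost A B D E Ct eps a1 ths)
           / avg Th (\<lambda>th. Ct th eps - Ct ths eps)
         = (A - B * (avg Th (\<lambda>th. Ct th (a1 * eps) - Ct ths (a1 * eps))
                      / avg Th (\<lambda>th. Ct th eps - Ct ths eps))) / D"
  using assms unfolding zne_cost_diff avg_linear_combination by (simp add: field_simps)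

lemma mitigation_cost_ge:
  assumes "v0 > 0" and "v1 \<ge> v0"
  shows "mitigation_cost A B D v0 v1 \<ge> (A\<^sup>2 + B\<^sup>2) / D\<^sup>2"
proof -
  have "mitigation_cost A B D v0 v1 = (A / D)\<^sup>2 + (B / D)\<^sup>2 * (v1 / v0)"
    unfolding mitigation_cost_def using assms(1) by (simp add: field_simps)
  moreover have "(B / D)\<^sup>2 * (v1 / v0) \<ge> (B / D)\<^sup>2"
    using assms mult_left_mono[of 1 "v1 / v0" "(B / D)\<^sup>2"] by simp
  ultimately show ?thesis by (simp add: power_divide add_divide_distrib)
qed

lemma resolvability_le_of_cost_ge:
  fixes A B D \<gamma> x :: real
  assumes "B \<noteq> 0" and "D \<noteq> 0" and "\<gamma> \<ge> (A\<^sup>2 + B\<^sup>2) / D\<^sup>2"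
  shows "1 / \<gamma> * (x / D)\<^sup>2 \<le> x\<^sup>2 / (A\<^sup>2 + B\<^sup>2)"
proof -
  have "(A\<^sup>2 + B\<^sup>2) / D\<^sup>2 > 0"
    using assms(1,2) by (simp add: add_nonneg_pos)
  then have "1 / \<gamma> \<le> D\<^sup>2 / (A\<^sup>2 + B\<^sup>2)"
    using assms(3) le_imp_inverse_le by (fastforce simp: inverse_eq_divide)
  then have "1 / \<gamma> * (x / D)\<^sup>2 \<le> D\<^sup>2 / (A\<^sup>2 + B\<^sup>2) * (x / D)\<^sup>2"
    by (rule mult_right_mono) simp
  also have "\<dots> = x\<^sup>2 / (A\<^sup>2 + B\<^sup>2)"
    using assms(2) by (simp add: power_divide)
  finally show ?thesis .
qed

lemma sq_diff_div_sum_sq_eq: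
  fixes A B w :: real
  assumes "B \<noteq> 0"
  shows "(A - B * w)\<^sup>2 / (A\<^sup>2 + B\<^sup>2) = (w - A / B)\<^sup>2 / ((A / B)\<^sup>2 + 1)"
proof -
  have "(A - B * w)\<^sup>2 = B\<^sup>2 * (w - A / B)\<^sup>2" and "A\<^sup>2 + B\<^sup>2 = B\<^sup>2 * ((A / B)\<^sup>2 + 1)"
    using assms by (simp_all add: field_simps power2_eq_square)
  then show ?thesis using assms by simp
qed

lemma sq_diff_div_sq_add_one_le_one:
  fixes z c :: real
  assumes "0 \<le> z" and "z \<le> 1" and "c \<ge> 0"
  shows "(z - c)\<^sup>2 / (c\<^sup>2 + 1) \<le> 1"
proof -
  have "(z - c)\<^sup>2 = z\<^sup>2 - 2 * (z * c) + c\<^sup>2" by (simp add: power2_diff)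
  also have "\<dots> \<le> 1 + c\<^sup>2"
    using assms power_le_one[of z 2] mult_nonneg_nonneg[of z c] by linarith
  finally show ?thesis by (simp add: add.commute add_pos_nonneg)
qed

lemma zne_ratio_pos:
  fixes a1 eps :: real and r t :: "real \<Rightarrow> real" and L :: nat
  assumes "eps > 0" and "a1 > 1" and "\<forall>x>0. r x > 0"
    and "c = a1
        \<or> c = a1 * r eps powr t eps / r (a1 * eps) powr t (a1 * eps)
        \<or> c = a1 powr (- (real L + 1))"
  shows "c > 0"
proof -
  have "r eps > 0" "r (a1 * eps) > 0" using assms(1-3) by auto
  then show ?thesis using assms(2,4) by auto
qed

theorem proposition2:
  fixes Th :: "'p set" and Ct :: "'p \<Rightarrow> real \<Rightarrow> real" and ths :: 'p
    and eps a1 A B D E c v0 v1 :: real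
    and r t :: "real \<Rightarrow> real" and L :: nat
  assumes fin: "finite Th" and ne: "Th \<noteq> {}"
    and eps: "eps > 0" and a1: "a1 > 1"
    and D: "D \<noteq> 0" and B: "B \<noteq> 0" and c_def: "c = A / B"
    and r_pos: "\<forall>x>0. r x > 0" and t_pos: "\<forall>x>0. t x > 0"
    and strategy: "c = a1
        \<or> c = a1 * r eps powr t eps / r (a1 * eps) powr t (a1 * eps)
        \<or> c = a1 powr (- (real L + 1))"
    and v0: "v0 > 0" and v1: "v1 \<ge> v0"
    and ths_in: "ths \<in> Th" and ths_min: "\<forall>th\<in>Th. Ct ths eps \<le> Ct th eps"
    and nz: "avg Th (\<lambda>th. Ct th eps - Ct ths eps) \<noteq> 0"
  defines "z \<equiv> avg Th (\<lambda>th. Ct th (a1 * eps) - Ct ths (a1 * eps))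
                / avg Th (\<lambda>th. Ct th eps - Ct ths eps)"
    and "chi \<equiv> avg_rel_resolvability (mitigation_cost A B D v0 v1) Th
                 (zne_cost A B D E Ct eps a1) (\<lambda>th. Ct th eps) ths"
  shows "chi \<le> (z - c)^2 / (c^2 + 1)
    \<and> ((z \<le> 1 \<and> avg Th (\<lambda>th. Ct th (a1 * eps) - Ct ths (a1 * eps)) \<ge> 0) \<longrightarrow> chi \<le> 1)"
proof
  have "chi = 1 / mitigation_cost A B D v0 v1 * ((A - B * z) / D)\<^sup>2"
    unfolding chi_def avg_rel_resolvability_def z_def
    using avg_zne_cost_diff_ratio[where Ct = Ct and ths = ths and eps = eps, OF nz] by simp
  also have "\<dots> \<le> (z - c)\<^sup>2 / (c\<^sup>2 + 1)"
    using resolvability_le_of_cost_ge[where A = A and x = "A - B * z",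
        OF B D mitigation_cost_ge[OF v0 v1]]
    unfolding sq_diff_div_sum_sq_eq[OF B] c_def .
  finally show bound: "chi \<le> (z - c)\<^sup>2 / (c\<^sup>2 + 1)" .
  show "(z \<le> 1 \<and> avg Th (\<lambda>th. Ct th (a1 * eps) - Ct ths (a1 * eps)) \<ge> 0) \<longrightarrow> chi \<le> 1"
  proof
    assume z1: "z \<le> 1 \<and> avg Th (\<lambda>th. Ct th (a1 * eps) - Ct ths (a1 * eps)) \<ge> 0"
    have "avg Th (\<lambda>th. Ct th eps - Ct ths eps) \<ge> 0"
      using ths_min by (intro avg_nonneg) auto
    with z1 have "z \<ge> 0" unfolding z_def by simp
    with z1 zne_ratio_pos[OF eps a1 r_pos strategy]
    have "(z - c)\<^sup>2 / (c\<^sup>2 + 1) \<le> 1" by (intro sq_diff_div_sq_add_one_le_one) auto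
    with bound show "chi \<le> 1" by linarith
  qed
qed

end
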